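(* (1) The groups $\mathrm{Aut}(Q_D)$ and $\mathrm{Aut}(Q_W)$ are each conjugate in $GL(4,\mathbb R)$ to the Lorentz group $O(3,1)=\mathrm{Aut}(Q_{\mathcal L})$; explicitly $\mathrm{Aut}(Q_D)=\mathbf J_0^{-1}O(3,1)\mathbf J_0$ and $\mathrm{Aut}(Q_W)=\mathbf A^{-1}O(3,1)\mathbf A$ where $\mathbf J_0=\tfrac12\begin{pmatrix}1&1&1&1\\1&1&-1&-1\\1&-1&1&-1\\1&-1&-1&1\end{pmatrix}$ and $\mathbf A=\begin{pmatrix}2&1&0&0\\2&-1&0&0\\0&0&1&1\\0&0&-1&1\end{pmatrix}$. (2) For any two ordered, oriented Descartes configurations $\mathcal D,\mathcal D'$ there is a unique $\mathbf U\in\mathrm{Aut}(Q_D)$ with $\mathbf U\mathbf W_{\mathcal D}=\mathbf W_{\mathcal D'}$; in particular $\mathbf W\mapsto\mathbf U\mathbf W$ defines a transitive left action of $\mathrm{Aut}(Q_D)$ on $\mathcal M_{\mathbb D}$. (3) For any two ordered, oriented Descartes configurations $\mathcal D,\mathcal D'$ there is a unique $\mathbf V\in\mathrm{Aut}(Q_W)$ with $\mathbf W_{\mathcal D}\mathbf V^{-1}=\mathbf W_{\mathcal D'}$; in particular $\mathbf W\mapsto \mathbf W\mathbf V^{-1}$ defines a transitive right action of $\mathrm{Aut}(Q_W)$ on $\mathcal M_{\mathbb D}$. (4) These two actions on $\mathcal M_{\mathbb D}$ commute.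
   Context: Oriented circles/lines, interiors, and (ordered, oriented) Descartes configurations: an oriented circle of radius $r$ has oriented curvature $b=\pm1/r$ ($+$ if its normal points inward, in which case its interior is the open disk; $-$ otherwise, interior the open exterior); an oriented line has curvature $0$, a unit normal $\mathbf h$, and interior the open half-plane into which $\mathbf h$ points. A Descartes configuration is four mutually tangent circles/lines with six distinct tangency points (parallel lines tangent at $\infty$); it is oriented if the interiors are pairwise disjoint, or become so after reversing all orientations. Augmented curvature-center coordinates of an oriented circle with center $\mathbf c=(c_1,c_2)$ and oriented radius $r$ ($r>0$ iff the interior is the bounded disk): $\mathbf w(C)=\big((|\mathbf c|^2-r^2)/r,\;1/r,\;c_1/r,\;c_2/r\big)$; of the oriented line $\{\mathbf x:\mathbf x\cdot\mathbf h=m\}$ with interior-pointing unit normal $\mathbf h$: $\mathbf w(C)=(2m,0,h_1,h_2)$. For an ordered, oriented Descartes configuration $\mathcal D=(C_1,\dots,C_4)$, $\mathbf W_{\mathcal D}$ is the $4\times4$ matrix with rows $\mathbf w(C_i)$. $\mathbf Q_D=\mathbf I-\frac12\mathbf 1\mathbf 1^T$; $\mathbf Q_W=\begin{pmatrix}0&-4&0&0\\-4&0&0&0\\0&0&2&0\\0&0&0&2\end{pmatrix}$; $\mathbf Q_{\mathcal L}=\mathrm{diag}(-1,1,1,1)$. For a symmetric matrix $\mathbf Q$, $\mathrm{Aut}(Q)=\{\mathbf U\in GL(4,\mathbb R):\mathbf U^T\mathbf Q\mathbf U=\mathbf Q\}$. Known fact (Augmented Euclidean Descartes Theorem): $\mathcal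 D\mapsto\mathbf W_{\mathcal D}$ is a bijection from the set of ordered, oriented Descartes configurations onto $\mathcal M_{\mathbb D}:=\{\mathbf W\in M_4(\mathbb R):\mathbf W^T\mathbf Q_D\mathbf W=\mathbf Q_W\}$. *)

theory Defs
  imports "HOL-Analysis.Analysis"
begin

text \<open>OCirc c r : circle with centre c and oriented (signed, nonzero) radius r;
  r > 0 means the interior is the open disk, r < 0 means the interior is the open exterior.
  OLine h m : the line {x. x \<bullet> h = m} with interior-pointing unit normal h.\<close>
datatype ocircle = OCirc "real^2" real | OLine "real^2" real

fun ocircle_wf :: "ocircle \<Rightarrow> bool" where
  "ocircle_wf (OCirc c r) = (r \<noteq> 0)"
| "ocircle_wf (OLine h m) = (norm h = 1)"

fun oc_points :: "ocircle \<Rightarrow> (real^2) set" where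
  "oc_points (OCirc c r) = sphere c \<bar>r\<bar>"
| "oc_points (OLine h m) = {x. x \<bullet> h = m}"

fun oc_interior :: "ocircle \<Rightarrow> (real^2) set" where
  "oc_interior (OCirc c r) = (if r > 0 then ball c r else {x. dist x c > \<bar>r\<bar>})"
| "oc_interior (OLine h m) = {x. x \<bullet> h > m}"

fun oc_reverse :: "ocircle \<Rightarrow> ocircle" where
  "oc_reverse (OCirc c r) = OCirc c (- r)"
| "oc_reverse (OLine h m) = OLine (- h) (- m)"

fun is_line :: "ocircle \<Rightarrow> bool" where
  "is_line (OCirc c r) = False"
| "is_line (OLine h m) = True"

text \<open>Tangency: two distinct parallel lines are tangent (at infinity); otherwise
  (at least one genuine circle) tangency means the two point sets meet in exactly one point.\<close>
definition oc_tangent :: "ocircle \<Rightarrow> ocircle \<Rightarrow> bool" where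
  "oc_tangent C1 C2 =
     (if is_line C1 \<and> is_line C2
      then (\<exists>h m h' m'. C1 = OLine h m \<and> C2 = OLine h' m' \<and> (h' = h \<or> h' = - h)
                          \<and> oc_points C1 \<inter> oc_points C2 = {})
      else (\<exists>!p. p \<in> oc_points C1 \<inter> oc_points C2))"

text \<open>Tangency point, in the plane extended by the point at infinity (None).\<close>
definition oc_tangency_point :: "ocircle \<Rightarrow> ocircle \<Rightarrow> (real^2) option" where
  "oc_tangency_point C1 C2 =
     (if is_line C1 \<and> is_line C2 then None
      else Some (THE p. p \<in> oc_points C1 \<inter> oc_points C2))"

definition descartes_config :: "(4 \<Rightarrow> ocircle) \<Rightarrow> bool" where
  "descartes_config D \<longleftrightarrow>
     (\<forall>i. ocircle_wf (D i)) \<and>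
     (\<forall>i j. i \<noteq> j \<longrightarrow> oc_tangent (D i) (D j)) \<and>
     (\<forall>i j k l. i \<noteq> j \<longrightarrow> k \<noteq> l \<longrightarrow> {i, j} \<noteq> {k, l} \<longrightarrow>
        oc_tangency_point (D i) (D j) \<noteq> oc_tangency_point (D k) (D l))"

definition oriented_descartes_config :: "(4 \<Rightarrow> ocircle) \<Rightarrow> bool" where
  "oriented_descartes_config D \<longleftrightarrow>
     descartes_config D \<and>
     ((\<forall>i j. i \<noteq> j \<longrightarrow> oc_interior (D i) \<inter> oc_interior (D j) = {}) \<or>
      (\<forall>i j. i \<noteq> j \<longrightarrow>
          oc_interior (oc_reverse (D i)) \<inter> oc_interior (oc_reverse (D j)) = {}))"

fun aug_coords :: "ocircle \<Rightarrow> real^4" where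
  "aug_coords (OCirc c r) = vector [(c \<bullet> c - r\<^sup>2) / r, 1 / r, c$1 / r, c$2 / r]"
| "aug_coords (OLine h m) = vector [2 * m, 0, h$1, h$2]"

definition W_matrix :: "(4 \<Rightarrow> ocircle) \<Rightarrow> real^4^4" where
  "W_matrix D = (\<chi> i. aug_coords (D i))"

definition Q_D :: "real^4^4" where
  "Q_D = mat 1 - (\<chi> i j. 1 / 2)"

definition Q_W :: "real^4^4" where
  "Q_W = vector [vector [0, -4, 0, 0], vector [-4, 0, 0, 0], vector [0, 0, 2, 0], vector [0, 0, 0, 2]]"

definition Q_L :: "real^4^4" where
  "Q_L = vector [vector [-1, 0, 0, 0], vector [0, 1, 0, 0], vector [0, 0, 1, 0], vector [0, 0, 0, 1]]"

definition Aut :: "real^4^4 \<Rightarrow> (real^4^4) set" where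
  "Aut Q = {U. invertible U \<and> transpose U ** Q ** U = Q}"

definition J0 :: "real^4^4" where
  "J0 = (1 / 2) *\<^sub>R vector [vector [1, 1, 1, 1], vector [1, 1, -1, -1],
                            vector [1, -1, 1, -1], vector [1, -1, -1, 1]]"

definition A_mat :: "real^4^4" where
  "A_mat = vector [vector [2, 1, 0, 0], vector [2, -1, 0, 0], vector [0, 0, 1, 1], vector [0, 0, -1, 1]]"

definition M_D :: "(real^4^4) set" where
  "M_D = {W. transpose W ** Q_D ** W = Q_W}"

end

theory Submission
  imports Defs
begin

(*
  Parts (1)-(4) are linear algebra of congruences: Q_D = J0^T Q_L J0 and Q_W = A^T Q_L A, so
  conjugation by J0 resp. A identifies Aut Q_D resp. Aut Q_W with Aut Q_L. Every W in M_D is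
  invertible because Q_W is; for W, W' in M_D, the matrix U = W' W^-1 is the only one with
  U W = W' and it preserves Q_D, while V = W'^-1 W is the only one with W V^-1 = W' and it
  preserves Q_W.

  The geometric input is that W_D lies in M_D. As Q_D is its own inverse, this amounts to
  W Q_W^-1 W^T = Q_D, i.e. the rows w_i = w(C_i) satisfy <w_i, w_i> = 1/2 and
  <w_i, w_j> = -1/2 (i ~= j) for the form <x, y> = x Q_W^-1 y^T. Off the diagonal, <w_i, w_j> = -1/2 follows from C_i and C_j touching with
  disjoint interiors: two circles of oriented radii r, r' then have centres at distance
  |r + r'|; a circle touching a line must have r > 0 and its centre at signed distance -r
  from the line; two lines must be parallel with opposite normals. Reversing all
  orientations negates every w_i and leaves the form unchanged.
*)

lemma matrix_inv_unique:
  fixes A B :: "'a::field^'n^'n"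
  assumes "A ** B = mat 1"
  shows "matrix_inv A = B"
proof -
  have "B ** A = mat 1"
    using assms matrix_left_right_inverse by blast
  with assms have inv: "A ** matrix_inv A = mat 1 \<and> matrix_inv A ** A = mat 1"
    unfolding matrix_inv_def by (rule someI[where x = B, OF conjI])
  have "matrix_inv A = matrix_inv A ** (A ** B)"
    using assms by simp
  also have "\<dots> = (matrix_inv A ** A) ** B"
    by (simp add: matrix_mul_assoc)
  also have "\<dots> = B"
    using inv by simp
  finally show ?thesis .
qed

lemma matrix_inv:
  fixes A :: "'a::field^'n^'n"
  assumes "invertible A"
  shows matrix_inv_right: "A ** matrix_inv A = mat 1"
    and matrix_inv_left: "matrix_inv A ** A = mat 1"
proof -
  obtain B where "A ** B = mat 1"
    using assms invertible_right_inverse by blast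
  thus "A ** matrix_inv A = mat 1"
    by (simp add: matrix_inv_unique)
  thus "matrix_inv A ** A = mat 1"
    using matrix_left_right_inverse by blast
qed

lemma invertible_matrix_inv:
  fixes A :: "'a::field^'n^'n"
  assumes "invertible A"
  shows "invertible (matrix_inv A)"
  unfolding invertible_def using assms
  by (intro exI[of _ A] conjI matrix_inv_left matrix_inv_right)

lemma matrix_inv_matrix_inv:
  fixes A :: "'a::field^'n^'n"
  assumes "invertible A"
  shows "matrix_inv (matrix_inv A) = A"
  using assms by (simp add: matrix_inv_left matrix_inv_unique)

lemma matrix_inv_mat_1: "matrix_inv (mat 1 :: 'a::field^'n^'n) = mat 1"
  by (simp add: matrix_inv_unique)

lemma matrix_inv_mult:
  fixes A B :: "'a::field^'n^'n"
  assumes "invertible A" "invertible B"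
  shows "matrix_inv (A ** B) = matrix_inv B ** matrix_inv A"
proof (rule matrix_inv_unique)
  have "A ** B ** (matrix_inv B ** matrix_inv A) = A ** (B ** matrix_inv B) ** matrix_inv A"
    by (simp add: matrix_mul_assoc)
  thus "A ** B ** (matrix_inv B ** matrix_inv A) = mat 1"
    using assms by (simp add: matrix_inv_right)
qed

lemma transpose_matrix_inv_right:
  fixes A :: "'a::field^'n^'n"
  assumes "invertible A"
  shows "transpose (matrix_inv A) ** transpose A = mat 1"
  using assms by (simp add: matrix_inv_right flip: matrix_transpose_mul)

lemma congruence_mult:
  fixes A :: "'a::comm_semiring_1^'m^'n" and B :: "'a^'p^'m" and Q :: "'a^'n^'n"
  shows "transpose (A ** B) ** Q ** (A ** B) = transpose B ** (transpose A ** Q ** A) ** B"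
  by (simp add: matrix_transpose_mul matrix_mul_assoc)

lemma congruence_matrix_inv:
  fixes P Q R :: "'a::field^'n^'n"
  assumes "invertible P" "transpose P ** Q ** P = R"
  shows "transpose (matrix_inv P) ** R ** matrix_inv P = Q"
proof -
  have "transpose (matrix_inv P) ** R ** matrix_inv P
      = (transpose (matrix_inv P) ** transpose P) ** Q ** (P ** matrix_inv P)"
    unfolding assms(2)[symmetric] by (simp add: matrix_mul_assoc)
  thus ?thesis
    using assms(1) by (simp add: matrix_inv_right transpose_matrix_inv_right)
qed

lemma invertible_if_congruence:
  fixes W Q R :: "'a::field^'n^'n"
  assumes "transpose W ** Q ** W = R" "invertible R"
  shows "invertible W"
proof -
  have "(matrix_inv R ** transpose W ** Q) ** W = matrix_inv R ** (transpose W ** Q ** W)"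
    by (simp add: matrix_mul_assoc)
  hence "(matrix_inv R ** transpose W ** Q) ** W = mat 1"
    using assms by (simp add: matrix_inv_left)
  thus ?thesis
    using invertible_left_inverse by blast
qed

lemma congruence_if_Gram:
  fixes W Q R :: "'a::field^'n^'n"
  assumes "W ** matrix_inv R ** transpose W = matrix_inv Q" "invertible Q" "invertible R"
  shows "transpose W ** Q ** W = R"
proof -
  have "W ** (matrix_inv R ** transpose W ** Q) = matrix_inv Q ** Q"
    using assms(1) by (simp add: matrix_mul_assoc)
  hence "(matrix_inv R ** transpose W ** Q) ** W = mat 1"
    using assms(2) matrix_left_right_inverse by (auto simp: matrix_inv_left)
  hence "R ** ((matrix_inv R ** transpose W ** Q) ** W) = R"
    by simp
  thus ?thesis
    using assms(3) by (simp add: matrix_mul_assoc matrix_inv_right)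
qed

lemma matrix_inv_in_Aut: "U \<in> Aut Q \<Longrightarrow> matrix_inv U \<in> Aut Q"
  by (simp add: Aut_def invertible_matrix_inv congruence_matrix_inv)

lemma conjugate_in_Aut:
  assumes "invertible P" "transpose P ** Q ** P = R" "U \<in> Aut Q"
  shows "matrix_inv P ** U ** P \<in> Aut R"
proof -
  have "transpose (matrix_inv P ** U ** P) ** R ** (matrix_inv P ** U ** P)
      = transpose P ** (transpose U ** (transpose (matrix_inv P) ** R ** matrix_inv P) ** U) ** P"
    by (simp only: congruence_mult)
  also have "\<dots> = R"
    using assms by (simp add: Aut_def congruence_matrix_inv)
  finally show ?thesis
    using assms by (simp add: Aut_def invertible_mult invertible_matrix_inv)
qed

lemma Aut_conjugate:
  assumes "invertible P" "transpose P ** Q ** P = R"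
  shows "Aut R = (\<lambda>U. matrix_inv P ** U ** P) ` Aut Q"
proof (intro set_eqI iffI)
  fix V assume "V \<in> Aut R"
  hence "P ** V ** matrix_inv P \<in> Aut Q"
    using assms conjugate_in_Aut[of "matrix_inv P" R Q V]
    by (simp add: invertible_matrix_inv congruence_matrix_inv matrix_inv_matrix_inv)
  moreover have "matrix_inv P ** (P ** V ** matrix_inv P) ** P
      = (matrix_inv P ** P) ** V ** (matrix_inv P ** P)"
    by (simp add: matrix_mul_assoc)
  hence "V = matrix_inv P ** (P ** V ** matrix_inv P) ** P"
    using assms(1) by (simp add: matrix_inv_left)
  ultimately show "V \<in> (\<lambda>U. matrix_inv P ** U ** P) ` Aut Q"
    by (rule rev_image_eqI)
qed (use assms conjugate_in_Aut in blast)

lemma congruence_left_Aut: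
  assumes "U \<in> Aut Q" "transpose W ** Q ** W = R"
  shows "transpose (U ** W) ** Q ** (U ** W) = R"
  using assms by (simp add: Aut_def congruence_mult)

lemma congruence_right_Aut:
  assumes "V \<in> Aut R" "transpose W ** Q ** W = R"
  shows "transpose (W ** V) ** Q ** (W ** V) = R"
  using assms by (simp add: Aut_def congruence_mult)

lemma congruence_left_unique:
  fixes W W' :: "real^4^4"
  assumes W: "transpose W ** Q ** W = R" and W': "transpose W' ** Q ** W' = R"
    and "invertible R"
  shows "\<exists>!U. U \<in> Aut Q \<and> U ** W = W'"
proof -
  have inv: "invertible W" "invertible W'"
    using assms invertible_if_congruence by blast+
  define U where "U = W' ** matrix_inv W"
  have "transpose U ** Q ** U = transpose (matrix_inv W) ** R ** matrix_inv W"
    unfolding U_def congruence_mult W' ..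
  also have "\<dots> = Q"
    using inv(1) W by (rule congruence_matrix_inv)
  finally have "U \<in> Aut Q"
    unfolding Aut_def U_def using inv by (simp add: invertible_mult invertible_matrix_inv)
  moreover have "U2 ** W = W' \<longleftrightarrow> U2 = U" for U2
  proof
    assume "U2 ** W = W'"
    hence "U = U2 ** (W ** matrix_inv W)"
      unfolding U_def by (simp add: matrix_mul_assoc)
    thus "U2 = U"
      using inv by (simp add: matrix_inv_right)
  next
    assume "U2 = U"
    thus "U2 ** W = W'"
      using inv by (simp add: U_def matrix_inv_left flip: matrix_mul_assoc)
  qed
  ultimately show ?thesis
    by (intro ex1I[of _ U]) auto
qed

lemma congruence_right_unique:
  fixes W W' :: "real^4^4"
  assumes W: "transpose W ** Q ** W = R" and W': "transpose W' ** Q ** W' = R"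
    and "invertible R"
  shows "\<exists>!V. V \<in> Aut R \<and> W ** matrix_inv V = W'"
proof -
  have inv: "invertible W" "invertible W'"
    using assms invertible_if_congruence by blast+
  define V where "V = matrix_inv W' ** W"
  have "transpose V ** R ** V = transpose W ** (transpose (matrix_inv W') ** R ** matrix_inv W') ** W"
    unfolding V_def congruence_mult ..
  also have "\<dots> = R"
    using congruence_matrix_inv[OF inv(2) W'] W by simp
  finally have V: "V \<in> Aut R"
    unfolding Aut_def V_def using inv by (simp add: invertible_mult invertible_matrix_inv)
  have "matrix_inv V = matrix_inv W ** W'"
    unfolding V_def using inv
    by (simp add: matrix_inv_mult invertible_matrix_inv matrix_inv_matrix_inv)
  hence "W ** matrix_inv V = (W ** matrix_inv W) ** W'"
    by (simp add: matrix_mul_assoc)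
  hence "W ** matrix_inv V = W'"
    using inv by (simp add: matrix_inv_right)
  moreover have "V2 = V" if "V2 \<in> Aut R" "W ** matrix_inv V2 = W'" for V2
  proof -
    have "matrix_inv W ** W' = (matrix_inv W ** W) ** matrix_inv V2"
      by (simp add: matrix_mul_assoc flip: that(2))
    hence "matrix_inv V2 = matrix_inv W ** W'"
      using inv by (simp add: matrix_inv_left)
    hence "matrix_inv (matrix_inv V2) = matrix_inv (matrix_inv V)"
      using \<open>matrix_inv V = matrix_inv W ** W'\<close> by simp
    thus "V2 = V"
      using that(1) V by (simp add: Aut_def matrix_inv_matrix_inv)
  qed
  ultimately show ?thesis
    using V by blast
qed

section \<open>Touching balls and half-spaces\<close>

lemma disjoint_ballD:
  fixes x y :: "'a::real_normed_vector"
  assumes "ball x r \<inter> ball y s = {}" "0 < r" "0 < s"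
  shows "r + s \<le> dist x y"
proof (rule ccontr)
  assume "\<not> r + s \<le> dist x y"
  define t where "t = r / (r + s)"
  define z where "z = x + t *\<^sub>R (y - x)"
  have t: "0 < t" "t < 1" "t * (r + s) = r" "(1 - t) * (r + s) = s"
    using assms(2,3) by (auto simp: t_def field_simps)
  have "dist x z = t * dist x y"
    using t by (simp add: z_def dist_norm norm_minus_commute)
  also have "\<dots> < r"
    using \<open>\<not> r + s \<le> dist x y\<close> t by (metis not_le mult_strict_left_mono)
  finally have "z \<in> ball x r" by simp
  have "z - y = (1 - t) *\<^sub>R (x - y)"
    by (simp add: z_def algebra_simps)
  hence "dist y z = (1 - t) * dist x y"
    using t by (metis dist_commute dist_norm norm_scaleR abs_of_pos diff_gt_0_iff_gt)
  also have "\<dots> < s"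
    using \<open>\<not> r + s \<le> dist x y\<close> t by (metis not_le diff_gt_0_iff_gt mult_strict_left_mono)
  finally have "z \<in> ball y s" by simp
  with \<open>z \<in> ball x r\<close> assms(1) show False by blast
qed

lemma disjoint_balls_touching_dist:
  fixes c c' p :: "'a::real_normed_vector"
  assumes "ball c r \<inter> ball c' r' = {}" "0 < r" "0 < r'" "dist c p = r" "dist c' p = r'"
  shows "dist c c' = r + r'"
  using disjoint_ballD[OF assms(1-3)] assms(4,5) dist_triangle2[of c c' p] by simp

lemma ball_outside_exterior_touching_dist:
  fixes c c' p :: "'a::euclidean_space"
  assumes "ball c r \<inter> {x. R < dist x c'} = {}" "0 < r" "dist c p = r" "dist c' p = R"
  shows "dist c c' = R - r"
proof -
  have "ball c r \<subseteq> cball c' R"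
    using assms(1) by (auto simp: dist_commute)
  hence "dist c c' + r \<le> R"
    using assms(2) ball_subset_cball_iff by fastforce
  moreover have "R \<le> dist c c' + r"
    using assms(3,4) dist_triangle[of c' p c] by (simp add: dist_commute)
  ultimately show ?thesis by simp
qed

lemma circle_exteriors_meet:
  fixes c c' :: "'a::{real_normed_vector,perfect_space}"
  shows "\<exists>x. a < dist x c \<and> b < dist x c'"
proof -
  have "\<not> UNIV \<subseteq> cball c a \<union> cball c' b"
    using bounded_subset not_bounded_UNIV by (metis bounded_Un bounded_cball)
  then obtain x where "x \<notin> cball c a" "x \<notin> cball c' b"
    by blast
  hence "a < dist x c \<and> b < dist x c'"
    by (simp add: dist_commute not_le)
  thus ?thesis ..
qed

lemma disjoint_ball_halfspaceD:
  fixes c h :: "'a::real_inner"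
  assumes "ball c r \<inter> {x. m < x \<bullet> h} = {}" "0 < r" "norm h = 1"
  shows "c \<bullet> h + r \<le> m"
proof (rule ccontr)
  assume "\<not> c \<bullet> h + r \<le> m"
  define t where "t = (r + max 0 (m - c \<bullet> h)) / 2"
  have t: "0 \<le> t" "t < r" "m < c \<bullet> h + t"
    using assms(2) \<open>\<not> c \<bullet> h + r \<le> m\<close> by (auto simp: t_def max_def field_simps)
  have "c + t *\<^sub>R h \<in> ball c r"
    using t assms(3) by (simp add: dist_norm)
  moreover have "(c + t *\<^sub>R h) \<bullet> h = c \<bullet> h + t"
    using assms(3) by (simp add: inner_add_left norm_eq_1)
  ultimately show False
    using t assms(1) by auto
qed

lemma disjoint_ball_halfspace_touching:
  fixes c h p :: "'a::real_inner"
  assumes "ball c r \<inter> {x. m < x \<bullet> h} = {}" "0 < r" "norm h = 1" "dist c p = r" "p \<bullet> h = m"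
  shows "c \<bullet> h - m = - r"
proof -
  have "m - c \<bullet> h = (p - c) \<bullet> h"
    using assms(5) by (simp add: inner_diff_left)
  also have "\<dots> \<le> norm (p - c) * norm h"
    by (rule norm_cauchy_schwarz)
  also have "\<dots> = r"
    using assms(3,4) by (simp add: dist_norm norm_minus_commute)
  finally show ?thesis
    using disjoint_ball_halfspaceD[OF assms(1-3)] by simp
qed

lemma circle_exterior_halfspace_meet:
  fixes c h :: "'a::real_inner"
  assumes "norm h = 1"
  shows "\<exists>x. a < dist x c \<and> m < x \<bullet> h"
proof -
  define t where "t = \<bar>a\<bar> + \<bar>m\<bar> + \<bar>c \<bullet> h\<bar> + 1"
  have "dist (c + t *\<^sub>R h) c = t"
    using assms by (simp add: t_def dist_norm)
  moreover have "(c + t *\<^sub>R h) \<bullet> h = c \<bullet> h + t"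
    using assms by (simp add: inner_add_left norm_eq_1)
  moreover have "a < t" "m < c \<bullet> h + t"
    unfolding t_def by (smt (verit) abs_ge_self abs_ge_minus_self)+
  ultimately show ?thesis
    by metis
qed

section \<open>Augmented curvature-center coordinates\<close>

lemma vector_4 [simp]:
  "(vector [x, y, z, w] :: 'a::zero^4) $ 1 = x"
  "(vector [x, y, z, w] :: 'a::zero^4) $ 2 = y"
  "(vector [x, y, z, w] :: 'a::zero^4) $ 3 = z"
  "(vector [x, y, z, w] :: 'a::zero^4) $ 4 = w"
  unfolding vector_def by simp_all

lemmas matrix_4_simps = vec_eq_iff forall_4 sum_4 matrix_matrix_mult_def transpose_def mat_def

lemma invertible_J0: "invertible J0"
  unfolding invertible_right_inverse
  by (rule exI[of _ J0]) (simp add: matrix_4_simps J0_def)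

lemma invertible_A_mat: "invertible A_mat"
  unfolding invertible_right_inverse
  by (rule exI[of _ "vector [vector [1/4, 1/4, 0, 0], vector [1/2, -1/2, 0, 0],
                             vector [0, 0, 1/2, -1/2], vector [0, 0, 1/2, 1/2]]"])
     (simp add: matrix_4_simps A_mat_def)

lemma congruence_J0: "transpose J0 ** Q_L ** J0 = Q_D"
  by (simp add: matrix_4_simps J0_def Q_L_def Q_D_def)

lemma congruence_A_mat: "transpose A_mat ** Q_L ** A_mat = Q_W"
  by (simp add: matrix_4_simps A_mat_def Q_L_def Q_W_def)

lemma Q_D_mult_Q_D: "Q_D ** Q_D = mat 1"
  by (simp add: matrix_4_simps Q_D_def)

lemma matrix_inv_Q_W:
  "matrix_inv Q_W = vector [vector [0, -1/4, 0, 0], vector [-1/4, 0, 0, 0],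
                            vector [0, 0, 1/2, 0], vector [0, 0, 0, 1/2]]"
  by (rule matrix_inv_unique) (simp add: matrix_4_simps Q_W_def)

lemma invertible_Q_W: "invertible Q_W"
  unfolding invertible_right_inverse
  by (rule exI[of _ "matrix_inv Q_W"]) (simp add: matrix_inv_Q_W, simp add: matrix_4_simps Q_W_def)

definition aug_form :: "real^4 \<Rightarrow> real^4 \<Rightarrow> real" where
  "aug_form x y = (x$3 * y$3 + x$4 * y$4) / 2 - (x$1 * y$2 + x$2 * y$1) / 4"

lemma Gram_aug_form: "W ** matrix_inv Q_W ** transpose W = (\<chi> i j. aug_form (W $ i) (W $ j))"
  by (simp add: matrix_inv_Q_W matrix_4_simps aug_form_def algebra_simps)

lemma aug_form_sym: "aug_form x y = aug_form y x"
  by (simp add: aug_form_def algebra_simps)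

lemma aug_form_neg: "aug_form (- x) (- y) = aug_form x y"
  by (simp add: aug_form_def)

lemma inner_vec_2: "(a :: real^2) \<bullet> b = a$1 * b$1 + a$2 * b$2"
  by (simp add: inner_vec_def sum_2)

lemma aug_form_circles:
  assumes "r \<noteq> 0" "r' \<noteq> 0"
  shows "aug_form (aug_coords (OCirc c r)) (aug_coords (OCirc c' r'))
    = (r\<^sup>2 + r'\<^sup>2 - (dist c c')\<^sup>2) / (4 * r * r')"
proof -
  have "(dist c c')\<^sup>2 = (c - c') \<bullet> (c - c')"
    by (simp add: dist_norm power2_norm_eq_inner)
  also have "\<dots> = (c$1 - c'$1)\<^sup>2 + (c$2 - c'$2)\<^sup>2"
    by (simp add: inner_vec_2 power2_eq_square)
  finally have d: "(dist c c')\<^sup>2 = (c$1 - c'$1)\<^sup>2 + (c$2 - c'$2)\<^sup>2" .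
  show ?thesis
    unfolding d using assms by (simp add: aug_form_def inner_vec_2 field_simps power2_eq_square)
qed

lemma aug_form_circle_line:
  assumes "r \<noteq> 0"
  shows "aug_form (aug_coords (OCirc c r)) (aug_coords (OLine h m)) = (c \<bullet> h - m) / (2 * r)"
  using assms by (simp add: aug_form_def inner_vec_2 field_simps)

lemma aug_form_lines: "aug_form (aug_coords (OLine h m)) (aug_coords (OLine h' m')) = (h \<bullet> h') / 2"
  by (simp add: aug_form_def inner_vec_2 field_simps)

lemma aug_form_self:
  assumes "ocircle_wf C"
  shows "aug_form (aug_coords C) (aug_coords C) = 1/2"
proof (cases C)
  case (OCirc c r)
  thus ?thesis
    using assms aug_form_circles[of r r c c] by (simp add: field_simps power2_eq_square)
next
  case (OLine h m)
  thus ?thesis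
    using assms aug_form_lines[of h m h m] by (simp add: norm_eq_1)
qed

lemma aug_coords_reverse: "aug_coords (oc_reverse C) = - aug_coords C"
  by (cases C) (simp_all add: vec_eq_iff forall_4 field_simps power2_eq_square)

lemma aug_form_tangent_circles:
  assumes "r \<noteq> 0" "r' \<noteq> 0" "oc_tangent (OCirc c r) (OCirc c' r')"
    "oc_interior (OCirc c r) \<inter> oc_interior (OCirc c' r') = {}"
  shows "aug_form (aug_coords (OCirc c r)) (aug_coords (OCirc c' r')) = -1/2"
proof -
  obtain p where p: "dist c p = \<bar>r\<bar>" "dist c' p = \<bar>r'\<bar>"
    using assms(3) unfolding oc_tangent_def by auto
  consider "0 < r" "0 < r'" | "0 < r" "r' < 0" | "r < 0" "0 < r'" | "r < 0" "r' < 0"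
    using assms(1,2) by (meson linorder_neqE_linordered_idom)
  hence "dist c c' = \<bar>r + r'\<bar>"
  proof cases
    case 1
    thus ?thesis
      using disjoint_balls_touching_dist[of c r c' r' p] assms(4) p by simp
  next
    case 2
    thus ?thesis
      using ball_outside_exterior_touching_dist[of c r "- r'" c' p] assms(4) p zero_le_dist[of c c']
      by (simp add: abs_if)
  next
    case 3
    thus ?thesis
      using ball_outside_exterior_touching_dist[of c' r' "- r" c p] assms(4) p zero_le_dist[of c c']
      by (simp add: Int_commute dist_commute abs_if)
  next
    case 4
    thus ?thesis
      using circle_exteriors_meet[of "\<bar>r\<bar>" c "\<bar>r'\<bar>" c'] assms(4) by auto
  qed
  thus ?thesis
    unfolding aug_form_circles[OF assms(1,2)] using assms(1,2)
    by (simp add: field_simps power2_eq_square)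
qed

lemma aug_form_tangent_circle_line:
  assumes "r \<noteq> 0" "norm h = 1" "oc_tangent (OCirc c r) (OLine h m)"
    "oc_interior (OCirc c r) \<inter> oc_interior (OLine h m) = {}"
  shows "aug_form (aug_coords (OCirc c r)) (aug_coords (OLine h m)) = -1/2"
proof -
  obtain p where p: "dist c p = \<bar>r\<bar>" "p \<bullet> h = m"
    using assms(3) unfolding oc_tangent_def by auto
  have "0 < r"
    using circle_exterior_halfspace_meet[OF assms(2), of "\<bar>r\<bar>" c m] assms(1,4)
    by (cases "0 < r") auto
  hence "c \<bullet> h - m = - r"
    using disjoint_ball_halfspace_touching[of c r m h p] assms(2,4) p by simp
  thus ?thesis
    unfolding aug_form_circle_line[OF assms(1)] using assms(1) by simp
qed

lemma aug_form_tangent_lines: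
  assumes "norm h = 1" "oc_tangent (OLine h m) (OLine h' m')"
    "oc_interior (OLine h m) \<inter> oc_interior (OLine h' m') = {}"
  shows "aug_form (aug_coords (OLine h m)) (aug_coords (OLine h' m')) = -1/2"
proof -
  have hh: "h \<bullet> h = 1"
    using assms(1) by (simp add: norm_eq_1)
  have "h' \<noteq> h"
  proof
    assume "h' = h"
    have "(\<bar>m\<bar> + \<bar>m'\<bar> + 1) *\<^sub>R h \<in> oc_interior (OLine h m) \<inter> oc_interior (OLine h' m')"
      using hh \<open>h' = h\<close> by simp (smt (verit) abs_ge_self)
    with assms(3) show False by blast
  qed
  hence "h' = - h"
    using assms(2) by (auto simp: oc_tangent_def)
  thus ?thesis
    unfolding aug_form_lines using hh by simp
qed

lemma oc_tangent_sym: "oc_tangent C C' \<Longrightarrow> oc_tangent C' C"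
  unfolding oc_tangent_def by (auto simp: Int_commute)

lemma aug_form_tangent:
  assumes "ocircle_wf C" "ocircle_wf C'" "oc_tangent C C'" "oc_interior C \<inter> oc_interior C' = {}"
  shows "aug_form (aug_coords C) (aug_coords C') = -1/2"
proof (cases C; cases C')
  fix c r h' m' assume "C = OCirc c r" "C' = OLine h' m'"
  thus ?thesis
    using aug_form_tangent_circle_line assms by simp
next
  fix h m c' r' assume "C = OLine h m" "C' = OCirc c' r'"
  thus ?thesis
    using aug_form_tangent_circle_line[of r' h c' m] assms oc_tangent_sym[OF assms(3)]
    by (simp add: aug_form_sym Int_commute)
qed (use assms aug_form_tangent_circles aug_form_tangent_lines in simp_all)

lemma ocircle_wf_reverse: "ocircle_wf C \<Longrightarrow> ocircle_wf (oc_reverse C)"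
  by (cases C) auto

lemma oc_tangent_reverse: "oc_tangent C C' \<Longrightarrow> oc_tangent (oc_reverse C) (oc_reverse C')"
  by (cases C; cases C') (auto simp: oc_tangent_def)

lemma aug_form_descartes:
  assumes "oriented_descartes_config D"
  shows "aug_form (aug_coords (D i)) (aug_coords (D j)) = (if i = j then 1/2 else -1/2)"
proof (cases "i = j")
  case True
  thus ?thesis
    using assms aug_form_self by (simp add: oriented_descartes_config_def descartes_config_def)
next
  case False
  have wf: "ocircle_wf (D i)" "ocircle_wf (D j)" and tangent: "oc_tangent (D i) (D j)"
    using assms False by (auto simp: oriented_descartes_config_def descartes_config_def)
  consider "oc_interior (D i) \<inter> oc_interior (D j) = {}"
    | "oc_interior (oc_reverse (D i)) \<inter> oc_interior (oc_reverse (D j)) = {}"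
    using assms False unfolding oriented_descartes_config_def by blast
  thus ?thesis
  proof cases
    case 1
    thus ?thesis
      using aug_form_tangent[OF wf tangent] False by simp
  next
    case 2
    thus ?thesis
      using aug_form_tangent[OF ocircle_wf_reverse[OF wf(1)] ocircle_wf_reverse[OF wf(2)]
          oc_tangent_reverse[OF tangent]] False
      by (simp add: aug_coords_reverse aug_form_neg)
  qed
qed

lemma W_matrix_in_M_D:
  assumes "oriented_descartes_config D"
  shows "W_matrix D \<in> M_D"
proof -
  have "W_matrix D ** matrix_inv Q_W ** transpose (W_matrix D) = Q_D"
    using aug_form_descartes[OF assms]
    by (simp add: Gram_aug_form W_matrix_def vec_eq_iff Q_D_def mat_def)
  moreover have "matrix_inv Q_D = Q_D" "invertible Q_D"
    using Q_D_mult_Q_D by (auto simp: matrix_inv_unique invertible_right_inverse)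
  ultimately show ?thesis
    unfolding M_D_def using invertible_Q_W by (intro CollectI congruence_if_Gram) simp_all
qed

theorem theorem3p3:
  shows
    \<comment> \<open>(1) conjugacy to the Lorentz group O(3,1) = Aut Q_L\<close>
    "(invertible J0 \<and> Aut Q_D = (\<lambda>U. matrix_inv J0 ** U ** J0) ` Aut Q_L \<and>
      invertible A_mat \<and> Aut Q_W = (\<lambda>U. matrix_inv A_mat ** U ** A_mat) ` Aut Q_L)
   \<and> \<comment> \<open>(2) left action of Aut Q_D\<close>
     (\<forall>D D'. oriented_descartes_config D \<longrightarrow> oriented_descartes_config D' \<longrightarrow>
        (\<exists>!U. U \<in> Aut Q_D \<and> U ** W_matrix D = W_matrix D'))
   \<and> (\<forall>U\<in>Aut Q_D. \<forall>W\<in>M_D. U ** W \<in> M_D)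
   \<and> (\<forall>W\<in>M_D. mat 1 ** W = W)
   \<and> (\<forall>U1\<in>Aut Q_D. \<forall>U2\<in>Aut Q_D. \<forall>W\<in>M_D. (U1 ** U2) ** W = U1 ** (U2 ** W))
   \<and> (\<forall>W\<in>M_D. \<forall>W'\<in>M_D. \<exists>U\<in>Aut Q_D. U ** W = W')
   \<and> \<comment> \<open>(3) action W \<mapsto> W V^-1 of Aut Q_W\<close>
     (\<forall>D D'. oriented_descartes_config D \<longrightarrow> oriented_descartes_config D' \<longrightarrow>
        (\<exists>!V. V \<in> Aut Q_W \<and> W_matrix D ** matrix_inv V = W_matrix D'))
   \<and> (\<forall>V\<in>Aut Q_W. \<forall>W\<in>M_D. W ** matrix_inv V \<in> M_D)
   \<and> (\<forall>W\<in>M_D. W ** matrix_inv (mat 1) = W)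
   \<and> (\<forall>V1\<in>Aut Q_W. \<forall>V2\<in>Aut Q_W. \<forall>W\<in>M_D.
        (W ** matrix_inv V1) ** matrix_inv V2 = W ** matrix_inv (V2 ** V1))
   \<and> (\<forall>W\<in>M_D. \<forall>W'\<in>M_D. \<exists>V\<in>Aut Q_W. W ** matrix_inv V = W')
   \<and> \<comment> \<open>(4) the two actions commute\<close>
     (\<forall>U\<in>Aut Q_D. \<forall>V\<in>Aut Q_W. \<forall>W\<in>M_D.
        (U ** W) ** matrix_inv V = U ** (W ** matrix_inv V))"
proof -
  have left: "\<exists>!U. U \<in> Aut Q_D \<and> U ** W = W'"
    and right: "\<exists>!V. V \<in> Aut Q_W \<and> W ** matrix_inv V = W'"
    if "W \<in> M_D" "W' \<in> M_D" for W W'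
    using that congruence_left_unique congruence_right_unique invertible_Q_W
    unfolding M_D_def by auto
  have "U ** W \<in> M_D" if "U \<in> Aut Q_D" "W \<in> M_D" for U W
    using that congruence_left_Aut unfolding M_D_def by blast
  moreover have "W ** matrix_inv V \<in> M_D" if "V \<in> Aut Q_W" "W \<in> M_D" for V W
    using that congruence_right_Aut matrix_inv_in_Aut unfolding M_D_def by blast
  moreover have "matrix_inv (V2 ** V1) = matrix_inv V1 ** matrix_inv V2"
    if "V1 \<in> Aut Q_W" "V2 \<in> Aut Q_W" for V1 V2
    using that by (simp add: Aut_def matrix_inv_mult)
  ultimately show ?thesis
    by (intro conjI invertible_J0 invertible_A_mat Aut_conjugate congruence_J0 congruence_A_mat)
       (use W_matrix_in_M_D left right in \<open>auto simp: Bex_def matrix_inv_mat_1 matrix_mul_assoc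
          intro: ex1_implies_ex[OF left] ex1_implies_ex[OF right]\<close>)
qed

end
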